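(* Let $c>0$, $f_s>0$, let $M,N,K\ge1$ be integers, $T_{\max}=(N-1)/f_s$, $\bm{r}^{\mathrm{mic}}_1,\dots,\bm{r}^{\mathrm{mic}}_M\in\mathbb{R}^3$ with $E_M=\{\bm{r}^{\mathrm{mic}}_m\}$, $\bm{x}=(x_{m,n})\in\mathbb{R}^{MN}$. Let $\kappa$ be continuous with $\kappa(0)>0$ and $\lim_{|t|\to\infty}\kappa(t)=0$, and assume $\Gamma^K$ is amplitude lower-bounded. Then there exist an integer $K'\in\{0,\dots,K\}$, a pair $(\bm{a},\bm{r})\in\mathbb{R}_+^{K'}\times(\mathbb{R}^3\setminus E_M)^{K'}$ and $\widetilde{\bm{a}}\in\mathbb{R}_+^M$ such that, up to a permutation of the indices, $$\inf_{(\bm{a}',\bm{r}')\in\mathbb{R}_+^K\times\mathscr{C}^K}T(\bm{a}',\bm{r}')=\widetilde T(\bm{a},\bm{r},\widetilde{\bm{a}}):=\frac12\sum_{m=1}^M\sum_{n=0}^{N-1}\Big(x_{m,n}-\sum_{k=1}^{K'}a_k\gamma_{m,n}(\bm{r}_k)-\widetilde a_m\kappa(n/f_s)\Big)^2.$$ Moreover, there exists a minimizing sequence $(\bm{a}^l,\bm{r}^l)$ for this infimum such that $(a^l_k,\bm{r}^l_k)\to(a_k,\bm{r}_k)$ for all $k\in\{1,\dots,K'\}$ and $a^l_k\to0$ for $k\in\{K'+1,\dots,K\}$.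
   Context: $\mathbb{R}_+=[0,+\infty)$, $\|\cdot\|_2$ Euclidean norm. $T(\bm{a},\bm{r})=\frac12\|\bm{x}-\sum_{k=1}^K a_k\gamma(\bm{r}_k)\|_2^2$. For $\bm{r}\in\mathbb{R}^3\setminus E_M$, $\gamma_{m,n}(\bm{r})=\dfrac{\kappa\big(n/f_s-\|\bm{r}-\bm{r}^{\mathrm{mic}}_m\|_2/c\big)}{4\pi\|\bm{r}-\bm{r}^{\mathrm{mic}}_m\|_2}$, $1\le m\le M$, $0\le n\le N-1$. $\mathscr{C}=\bigcap_{m=1}^M\overline{B(\bm{r}^{\mathrm{mic}}_m,cT_{\max})}\setminus E_M$. $\Gamma^K(\bm{a},\bm{r})=\sum_k a_k\gamma(\bm{r}_k)$; it is amplitude lower-bounded if there is $C>0$ with $\|\Gamma^K(\bm{a},\bm{r})\|_2\ge C\sum_k a_k$ for all $(\bm{a},\bm{r})\in\mathbb{R}_+^K\times\mathscr{C}^K$. *)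

theory Defs
  imports "HOL-Analysis.Analysis"
begin

text \<open>Microphone positions: rmic :: nat => real^3, indices m in {1..M};
  time samples n in {0..<N}; sources k in {1..K}.\<close>

definition Tmax :: "real \<Rightarrow> nat \<Rightarrow> real" where
  "Tmax fs N = (real N - 1) / fs"

definition EM :: "nat \<Rightarrow> (nat \<Rightarrow> real^3) \<Rightarrow> (real^3) set" where
  "EM M rmic = rmic ` {1..M}"

definition gamma :: "real \<Rightarrow> real \<Rightarrow> (real \<Rightarrow> real) \<Rightarrow> (nat \<Rightarrow> real^3) \<Rightarrow> nat \<Rightarrow> nat \<Rightarrow> real^3 \<Rightarrow> real" where
  "gamma c fs \<kappa> rmic m n r =
     \<kappa> (real n / fs - norm (r - rmic m) / c) / (4 * pi * norm (r - rmic m))"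

definition Cset :: "real \<Rightarrow> real \<Rightarrow> nat \<Rightarrow> nat \<Rightarrow> (nat \<Rightarrow> real^3) \<Rightarrow> (real^3) set" where
  "Cset c fs M N rmic = (\<Inter>m\<in>{1..M}. cball (rmic m) (c * Tmax fs N)) - EM M rmic"

definition GammaK :: "real \<Rightarrow> real \<Rightarrow> (real \<Rightarrow> real) \<Rightarrow> (nat \<Rightarrow> real^3) \<Rightarrow> nat
    \<Rightarrow> (nat \<Rightarrow> real) \<Rightarrow> (nat \<Rightarrow> real^3) \<Rightarrow> nat \<Rightarrow> nat \<Rightarrow> real" where
  "GammaK c fs \<kappa> rmic K a r m n = (\<Sum>k=1..K. a k * gamma c fs \<kappa> rmic m n (r k))"

definition norm2MN :: "nat \<Rightarrow> nat \<Rightarrow> (nat \<Rightarrow> nat \<Rightarrow> real) \<Rightarrow> real" where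
  "norm2MN M N v = sqrt (\<Sum>m=1..M. \<Sum>n=0..<N. (v m n)\<^sup>2)"

definition Tfun :: "real \<Rightarrow> real \<Rightarrow> (real \<Rightarrow> real) \<Rightarrow> (nat \<Rightarrow> real^3) \<Rightarrow> nat \<Rightarrow> nat
    \<Rightarrow> (nat \<Rightarrow> nat \<Rightarrow> real) \<Rightarrow> nat \<Rightarrow> (nat \<Rightarrow> real) \<Rightarrow> (nat \<Rightarrow> real^3) \<Rightarrow> real" where
  "Tfun c fs \<kappa> rmic M N x K a r =
     (norm2MN M N (\<lambda>m n. x m n - GammaK c fs \<kappa> rmic K a r m n))\<^sup>2 / 2"

definition Ttilde :: "real \<Rightarrow> real \<Rightarrow> (real \<Rightarrow> real) \<Rightarrow> (nat \<Rightarrow> real^3) \<Rightarrow> nat \<Rightarrow> nat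
    \<Rightarrow> (nat \<Rightarrow> nat \<Rightarrow> real) \<Rightarrow> nat \<Rightarrow> (nat \<Rightarrow> real) \<Rightarrow> (nat \<Rightarrow> real^3) \<Rightarrow> (nat \<Rightarrow> real) \<Rightarrow> real" where
  "Ttilde c fs \<kappa> rmic M N x K' a r atl =
     (1/2) * (\<Sum>m=1..M. \<Sum>n=0..<N.
        (x m n - (\<Sum>k=1..K'. a k * gamma c fs \<kappa> rmic m n (r k)) - atl m * \<kappa> (real n / fs))\<^sup>2)"

definition amplitude_lower_bounded :: "real \<Rightarrow> real \<Rightarrow> (real \<Rightarrow> real) \<Rightarrow> (nat \<Rightarrow> real^3)
    \<Rightarrow> nat \<Rightarrow> nat \<Rightarrow> nat \<Rightarrow> bool" where
  "amplitude_lower_bounded c fs \<kappa> rmic M N K \<longleftrightarrow>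
     (\<exists>C>0. \<forall>a r. (\<forall>k\<in>{1..K}. 0 \<le> a k \<and> r k \<in> Cset c fs M N rmic) \<longrightarrow>
        norm2MN M N (GammaK c fs \<kappa> rmic K a r) \<ge> C * (\<Sum>k=1..K. a k))"

definition admissible :: "real \<Rightarrow> real \<Rightarrow> nat \<Rightarrow> nat \<Rightarrow> (nat \<Rightarrow> real^3) \<Rightarrow> nat
    \<Rightarrow> (nat \<Rightarrow> real) \<Rightarrow> (nat \<Rightarrow> real^3) \<Rightarrow> bool" where
  "admissible c fs M N rmic K a r \<longleftrightarrow> (\<forall>k\<in>{1..K}. 0 \<le> a k \<and> r k \<in> Cset c fs M N rmic)"

definition infT :: "real \<Rightarrow> real \<Rightarrow> (real \<Rightarrow> real) \<Rightarrow> (nat \<Rightarrow> real^3) \<Rightarrow> nat \<Rightarrow> nat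
    \<Rightarrow> (nat \<Rightarrow> nat \<Rightarrow> real) \<Rightarrow> nat \<Rightarrow> real" where
  "infT c fs \<kappa> rmic M N x K =
     Inf {Tfun c fs \<kappa> rmic M N x K a r | a r. admissible c fs M N rmic K a r}"

end

theory Submission
  imports Defs
begin

(* Take a minimizing sequence of admissible configurations. The amplitude lower bound keeps the
   amplitudes bounded and the positions stay in a ball, so a subsequence converges. Near the
   microphone rmic m the atom gamma m n behaves like kappa (n / fs) / (4 pi dist); since the sample
   (m, 0) of the model stays bounded and kappa 0 > 0, the ratio amplitude / distance of a source
   approaching rmic m stays bounded and, along a further subsequence, tends to some b >= 0. Such a
   source loses its amplitude, but its contribution to sample (m, n) tends to b kappa (n / fs) / (4 pi):
   this is where the extra term atl m * kappa (n / fs) of Ttilde comes from. The other sources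
   converge to points off the microphones, where gamma is continuous, so T converges along the
   subsequence and its limit is the infimum. A permutation moves the surviving sources to the front. *)

lemma norm2MN_eq_L2_set: "norm2MN M N v = L2_set (\<lambda>(m, n). v m n) ({1..M} \<times> {0..<N})"
  unfolding norm2MN_def L2_set_def by (simp add: sum.cartesian_product case_prod_beta)

lemma norm2MN_add_le: "norm2MN M N (\<lambda>m n. u m n + v m n) \<le> norm2MN M N u + norm2MN M N v"
  unfolding norm2MN_eq_L2_set split_def by (rule L2_set_triangle_ineq)

lemma abs_le_norm2MN:
  assumes "m \<in> {1..M}" and "n \<in> {0..<N}"
  shows "\<bar>v m n\<bar> \<le> norm2MN M N v"
  using member_le_L2_set[of "{1..M} \<times> {0..<N}" "(m, n)" "\<lambda>(m, n). \<bar>v m n\<bar>"] assms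
  by (simp add: norm2MN_eq_L2_set L2_set_def power2_abs case_prod_beta)

lemma Tfun_eq_sum:
  "Tfun c fs \<kappa> rmic M N x K a r =
     (\<Sum>m=1..M. \<Sum>n=0..<N. (x m n - GammaK c fs \<kappa> rmic K a r m n)\<^sup>2) / 2"
  unfolding Tfun_def norm2MN_def by (simp add: sum_nonneg)

lemma Tfun_nonneg: "0 \<le> Tfun c fs \<kappa> rmic M N x K a r"
  by (simp add: Tfun_def)

lemma norm2MN_GammaK_le:
  "norm2MN M N (GammaK c fs \<kappa> rmic K a r) \<le> norm2MN M N x + sqrt (2 * Tfun c fs \<kappa> rmic M N x K a r)"
proof -
  let ?\<Gamma> = "GammaK c fs \<kappa> rmic K a r"
  have "norm2MN M N ?\<Gamma> \<le> norm2MN M N x + norm2MN M N (\<lambda>m n. ?\<Gamma> m n - x m n)"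
    using norm2MN_add_le[of M N x "\<lambda>m n. ?\<Gamma> m n - x m n"] by simp
  also have "norm2MN M N (\<lambda>m n. ?\<Gamma> m n - x m n) = sqrt (2 * Tfun c fs \<kappa> rmic M N x K a r)"
    by (simp add: Tfun_def norm2MN_def power2_commute sum_nonneg)
  finally show ?thesis .
qed

lemma kappa_delay_tendsto:
  assumes "continuous_on UNIV \<kappa>" and "(\<rho> \<longlongrightarrow> r) F"
  shows "((\<lambda>l. \<kappa> (t - norm (\<rho> l - p) / c)) \<longlongrightarrow> \<kappa> (t - norm (r - p) / c)) F"
proof -
  have "((\<lambda>l. t - norm (\<rho> l - p) * inverse c) \<longlongrightarrow> t - norm (r - p) * inverse c) F"
    by (intro tendsto_intros assms)
  then show ?thesis
    using continuous_on_tendsto_compose[OF assms(1)] by (simp add: divide_inverse)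
qed

lemma gamma_tendsto:
  assumes "continuous_on UNIV \<kappa>" and "(\<rho> \<longlongrightarrow> r) F" and "r \<noteq> rmic m"
  shows "((\<lambda>l. gamma c fs \<kappa> rmic m n (\<rho> l)) \<longlongrightarrow> gamma c fs \<kappa> rmic m n r) F"
  unfolding gamma_def using assms by (intro tendsto_divide kappa_delay_tendsto tendsto_intros) auto

lemma mult_gamma_eq_ratio:
  assumes "r \<noteq> rmic m"
  shows "\<alpha> * gamma c fs \<kappa> rmic m n r =
    \<alpha> / norm (r - rmic m) * \<kappa> (real n / fs - norm (r - rmic m) / c) / (4 * pi)"
  using assms by (simp add: gamma_def field_simps)

lemma gamma_scaled_tendsto_at_mic:
  assumes "continuous_on UNIV \<kappa>" and "(\<rho> \<longlongrightarrow> rmic m) F" and "\<forall>l. \<rho> l \<noteq> rmic m"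
    and "((\<lambda>l. \<alpha> l / norm (\<rho> l - rmic m)) \<longlongrightarrow> b) F"
  shows "((\<lambda>l. \<alpha> l * gamma c fs \<kappa> rmic m n (\<rho> l)) \<longlongrightarrow> b * \<kappa> (real n / fs) / (4 * pi)) F"
proof -
  have "((\<lambda>l. \<alpha> l / norm (\<rho> l - rmic m) * \<kappa> (real n / fs - norm (\<rho> l - rmic m) / c) / (4 * pi))
      \<longlongrightarrow> b * \<kappa> (real n / fs - norm (rmic m - rmic m) / c) / (4 * pi)) F"
    by (intro tendsto_intros kappa_delay_tendsto assms) simp
  then show ?thesis
    using assms(3) by (simp add: mult_gamma_eq_ratio)
qed

lemma gamma_scaled_eventually_ge:
  assumes "continuous_on UNIV \<kappa>" and "\<kappa> (real n / fs) > 0"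
    and "(\<rho> \<longlongrightarrow> rmic m) F" and "\<forall>l. \<rho> l \<noteq> rmic m" and "\<forall>l. 0 \<le> \<alpha> l"
  shows "\<forall>\<^sub>F l in F. \<alpha> l / norm (\<rho> l - rmic m) * \<kappa> (real n / fs) / (8 * pi)
      \<le> \<alpha> l * gamma c fs \<kappa> rmic m n (\<rho> l)"
proof -
  have "\<forall>\<^sub>F l in F. \<kappa> (real n / fs) / 2 < \<kappa> (real n / fs - norm (\<rho> l - rmic m) / c)"
    using kappa_delay_tendsto[OF assms(1,3), of "real n / fs" "rmic m" c] assms(2)
    by (intro order_tendstoD) auto
  then show ?thesis
  proof eventually_elim
    case (elim l)
    let ?\<beta> = "\<alpha> l / norm (\<rho> l - rmic m)"
    have "?\<beta> * \<kappa> (real n / fs) / (8 * pi) = ?\<beta> * (\<kappa> (real n / fs) / 2) / (4 * pi)"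
      by simp
    also have "\<dots> \<le> ?\<beta> * \<kappa> (real n / fs - norm (\<rho> l - rmic m) / c) / (4 * pi)"
      using elim assms(5) by (intro divide_right_mono mult_left_mono) auto
    also have "\<dots> = \<alpha> l * gamma c fs \<kappa> rmic m n (\<rho> l)"
      using assms(4) by (simp add: mult_gamma_eq_ratio)
    finally show ?case .
  qed
qed

lemma finite_family_convergent_subsequence:
  fixes f :: "nat \<Rightarrow> 'i \<Rightarrow> 'a::{heine_borel, real_normed_vector}"
  assumes "finite I" and "\<forall>i\<in>I. \<exists>B. \<forall>\<^sub>F l in sequentially. norm (f l i) \<le> B"
  shows "\<exists>\<sigma> L. strict_mono \<sigma> \<and> (\<forall>i\<in>I. (\<lambda>l. f (\<sigma> l) i) \<longlonglongrightarrow> L i)"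
  using assms
proof (induction I rule: finite_induct)
  case empty
  show ?case
    using strict_mono_id by blast
next
  case (insert i I)
  then obtain \<sigma> L where \<sigma>: "strict_mono \<sigma>" and L: "\<forall>j\<in>I. (\<lambda>l. f (\<sigma> l) j) \<longlonglongrightarrow> L j"
    by blast
  obtain B where "\<forall>\<^sub>F l in sequentially. norm (f l i) \<le> B"
    using insert.prems by blast
  then have "\<forall>\<^sub>F l in sequentially. norm (f (\<sigma> l) i) \<le> B"
    by (rule eventually_subseq[OF \<sigma>])
  then obtain l0 where l0: "\<And>l. l \<ge> l0 \<Longrightarrow> norm (f (\<sigma> l) i) \<le> B"
    by (auto simp: eventually_sequentially)
  have "bounded (range (\<lambda>l. f (\<sigma> (l + l0)) i))"
    unfolding bounded_iff using l0 by (intro exI[of _ B]) auto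
  then obtain Li \<tau> where \<tau>: "strict_mono \<tau>" and Li: "(\<lambda>l. f (\<sigma> (\<tau> l + l0)) i) \<longlonglongrightarrow> Li"
    using bounded_imp_convergent_subsequence unfolding o_def by blast
  have \<tau>': "strict_mono (\<lambda>l. \<tau> l + l0)"
    using \<tau> by (simp add: strict_mono_def)
  have "(\<lambda>l. f (\<sigma> (\<tau> l + l0)) j) \<longlonglongrightarrow> L j" if "j \<in> I" for j
    using LIMSEQ_subseq_LIMSEQ[OF L[rule_format, OF that] \<tau>'] by (simp add: o_def)
  moreover have "strict_mono (\<lambda>l. \<sigma> (\<tau> l + l0))"
    using strict_mono_o[OF \<sigma> \<tau>'] by (simp add: o_def)
  ultimately show ?case
    using Li by (intro exI[of _ "\<lambda>l. \<sigma> (\<tau> l + l0)"] exI[of _ "L(i := Li)"]) auto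
qed

lemma obtain_bij_onto_initial_segment:
  assumes "B \<subseteq> {1..K}"
  obtains \<pi> where "bij_betw \<pi> {1..card B} B" and "bij_betw \<pi> {card B + 1..K} ({1..K} - B)"
    and "bij_betw \<pi> {1..K} {1..K}"
proof -
  have "finite B"
    using assms finite_subset by blast
  then obtain h1 where h1: "bij_betw h1 {1..card B} B"
    using finite_same_card_bij[of "{1..card B}" B] by auto
  have "card ({1..K} - B) = card {card B + 1..K}"
    using assms by (simp add: card_Diff_subset \<open>finite B\<close>)
  then obtain h2 where h2: "bij_betw h2 {card B + 1..K} ({1..K} - B)"
    using finite_same_card_bij[of "{card B + 1..K}" "{1..K} - B"] by auto
  let ?\<pi> = "\<lambda>k. if k \<le> card B then h1 k else h2 k"
  have front: "bij_betw ?\<pi> {1..card B} B"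
    using h1 by (rule bij_betw_cong[THEN iffD1, rotated]) auto
  have rest: "bij_betw ?\<pi> {card B + 1..K} ({1..K} - B)"
    using h2 by (rule bij_betw_cong[THEN iffD1, rotated]) auto
  have "{1..card B} \<union> {card B + 1..K} = {1..K}"
    using card_mono[OF _ assms] by auto
  moreover have "B \<union> ({1..K} - B) = {1..K}"
    using assms by blast
  ultimately have "bij_betw ?\<pi> {1..K} {1..K}"
    using bij_betw_combine[OF front rest Diff_disjoint] by simp
  with front rest show ?thesis
    by (rule that)
qed

lemma GammaK_reindex:
  assumes "bij_betw \<pi> {1..K} {1..K}"
  shows "GammaK c fs \<kappa> rmic K (\<lambda>k. a (\<pi> k)) (\<lambda>k. r (\<pi> k)) = GammaK c fs \<kappa> rmic K a r"
  unfolding GammaK_def fun_eq_iff using sum.reindex_bij_betw[OF assms] by auto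

lemma Tfun_reindex:
  assumes "bij_betw \<pi> {1..K} {1..K}"
  shows "Tfun c fs \<kappa> rmic M N x K (\<lambda>k. a (\<pi> k)) (\<lambda>k. r (\<pi> k)) = Tfun c fs \<kappa> rmic M N x K a r"
  unfolding Tfun_def GammaK_reindex[OF assms] ..

lemma admissible_reindex:
  assumes "bij_betw \<pi> {1..K} {1..K}" and "admissible c fs M N rmic K a r"
  shows "admissible c fs M N rmic K (\<lambda>k. a (\<pi> k)) (\<lambda>k. r (\<pi> k))"
  using assms bij_betwE unfolding admissible_def by blast

locale source_localization =
  fixes c fs :: real and M N K :: nat
    and rmic :: "nat \<Rightarrow> real^3" and x :: "nat \<Rightarrow> nat \<Rightarrow> real"
    and \<kappa> :: "real \<Rightarrow> real"
  assumes M_ge_1: "M \<ge> 1" and N_ge_1: "N \<ge> 1"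
    and \<kappa>_continuous: "continuous_on UNIV \<kappa>" and \<kappa>_0_pos: "\<kappa> 0 > 0"
    and Cset_nonempty: "Cset c fs M N rmic \<noteq> {}"
    and lower_bounded: "amplitude_lower_bounded c fs \<kappa> rmic M N K"
begin

abbreviation T where "T \<equiv> Tfun c fs \<kappa> rmic M N x K"
abbreviation Tinf where "Tinf \<equiv> infT c fs \<kappa> rmic M N x K"
abbreviation adm where "adm \<equiv> admissible c fs M N rmic K"
abbreviation \<Gamma> where "\<Gamma> \<equiv> GammaK c fs \<kappa> rmic K"
abbreviation g where "g \<equiv> gamma c fs \<kappa> rmic"

definition minimizing :: "(nat \<Rightarrow> nat \<Rightarrow> real) \<Rightarrow> (nat \<Rightarrow> nat \<Rightarrow> real^3) \<Rightarrow> bool" where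
  "minimizing al rl \<longleftrightarrow> (\<forall>l. adm (al l) (rl l)) \<and> (\<lambda>l. T (al l) (rl l)) \<longlonglongrightarrow> Tinf"

lemma Tinf_le_T:
  assumes "adm a r"
  shows "Tinf \<le> T a r"
  unfolding infT_def using assms Tfun_nonneg by (intro cInf_lower bdd_belowI[of _ 0]) blast+

lemma minimizing_exists: "\<exists>al rl. minimizing al rl"
proof -
  obtain p where "p \<in> Cset c fs M N rmic"
    using Cset_nonempty by blast
  then have "adm (\<lambda>_. 0) (\<lambda>_. p)"
    by (simp add: admissible_def)
  then have nonempty: "{T a r | a r. adm a r} \<noteq> {}"
    by blast
  have "\<exists>a r. adm a r \<and> T a r < Tinf + inverse (Suc l)" for l
    using cInf_lessD[OF nonempty, of "Tinf + inverse (Suc l)"] by (auto simp: infT_def)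
  then obtain al rl where adm: "\<And>l. adm (al l) (rl l)"
    and below: "\<And>l. T (al l) (rl l) < Tinf + inverse (Suc l)"
    by metis
  have "(\<lambda>l. T (al l) (rl l)) \<longlonglongrightarrow> Tinf"
  proof (rule tendsto_sandwich[of "\<lambda>_. Tinf" _ _ "\<lambda>l. Tinf + inverse (Suc l)"])
    show "\<forall>\<^sub>F l in sequentially. Tinf \<le> T (al l) (rl l)"
      using adm Tinf_le_T by simp
    show "\<forall>\<^sub>F l in sequentially. T (al l) (rl l) \<le> Tinf + inverse (Suc l)"
      using below by (simp add: less_imp_le)
    show "(\<lambda>l. Tinf + inverse (real (Suc l))) \<longlonglongrightarrow> Tinf"
      using tendsto_add[OF tendsto_const LIMSEQ_inverse_real_of_nat, of Tinf] by simp
  qed simp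
  then show ?thesis
    using adm unfolding minimizing_def by blast
qed

lemma minimizing_subseq:
  assumes "minimizing al rl" and "strict_mono \<sigma>"
  shows "minimizing (\<lambda>l. al (\<sigma> l)) (\<lambda>l. rl (\<sigma> l))"
  using assms LIMSEQ_subseq_LIMSEQ[of "\<lambda>l. T (al l) (rl l)" Tinf \<sigma>]
  unfolding minimizing_def by (simp add: o_def)

lemma minimizing_reindex:
  assumes "bij_betw \<pi> {1..K} {1..K}" and "minimizing al rl"
  shows "minimizing (\<lambda>l k. al l (\<pi> k)) (\<lambda>l k. rl l (\<pi> k))"
  using assms admissible_reindex[OF assms(1)] unfolding minimizing_def Tfun_reindex[OF assms(1)] by blast

lemma minimizing_GammaK_bounded:
  assumes "minimizing al rl"
  obtains U where "\<And>l. norm2MN M N (\<Gamma> (al l) (rl l)) \<le> U"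
proof -
  have "Bseq (\<lambda>l. T (al l) (rl l))"
    using assms convergent_imp_Bseq unfolding minimizing_def convergent_def by blast
  then obtain Tb where Tb: "\<And>l. T (al l) (rl l) \<le> Tb"
    by (metis BseqE abs_le_D1 real_norm_def)
  have "norm2MN M N (\<Gamma> (al l) (rl l)) \<le> norm2MN M N x + sqrt (2 * Tb)" for l
  proof -
    have "sqrt (2 * T (al l) (rl l)) \<le> sqrt (2 * Tb)"
      using Tb[of l] by simp
    then show ?thesis
      using norm2MN_GammaK_le[of M N c fs \<kappa> rmic K "al l" "rl l" x] by linarith
  qed
  then show ?thesis
    by (rule that)
qed

lemma admissible_not_mic:
  assumes "adm a r" and "k \<in> {1..K}"
  shows "0 \<le> a k" and "r k \<notin> EM M rmic"
  using assms by (auto simp: admissible_def Cset_def)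

lemma minimizing_bounded:
  assumes "minimizing al rl"
  obtains B where "\<And>l k. k \<in> {1..K} \<Longrightarrow> norm (al l k) \<le> B \<and> norm (rl l k) \<le> B"
proof -
  obtain C where "C > 0" and C: "\<And>a r. adm a r \<Longrightarrow> C * (\<Sum>k=1..K. a k) \<le> norm2MN M N (\<Gamma> a r)"
    using lower_bounded unfolding amplitude_lower_bounded_def admissible_def by blast
  obtain U where U: "\<And>l. norm2MN M N (\<Gamma> (al l) (rl l)) \<le> U"
    using minimizing_GammaK_bounded[OF assms] by blast
  have "Cset c fs M N rmic \<subseteq> cball (rmic 1) (c * Tmax fs N)"
    using M_ge_1 by (auto simp: Cset_def)
  then obtain R where R: "\<And>y. y \<in> Cset c fs M N rmic \<Longrightarrow> norm y \<le> R"
    by (meson bounded_cball bounded_iff bounded_subset subsetD)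
  have bounds: "norm (al l k) \<le> U / C \<and> norm (rl l k) \<le> R" if "k \<in> {1..K}" for l k
  proof
    have adm: "adm (al l) (rl l)"
      using assms unfolding minimizing_def by blast
    have "al l k \<le> (\<Sum>k=1..K. al l k)"
      using that admissible_not_mic(1)[OF adm] by (intro member_le_sum) auto
    then have "C * al l k \<le> C * (\<Sum>k=1..K. al l k)"
      using \<open>C > 0\<close> by simp
    then have "C * al l k \<le> U"
      using C[OF adm] U[of l] by linarith
    then show "norm (al l k) \<le> U / C"
      using that admissible_not_mic(1)[OF adm] \<open>C > 0\<close> by (simp add: field_simps)
    show "norm (rl l k) \<le> R"
      using that adm R by (auto simp: admissible_def)
  qed
  then show ?thesis
    by (intro that[of "max (U / C) R"]) (meson max.coboundedI1 max.coboundedI2 order_trans)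
qed

lemma minimizing_convergent:
  obtains al rl as rs where "minimizing al rl"
    and "\<And>k. k \<in> {1..K} \<Longrightarrow> (\<lambda>l. al l k) \<longlonglongrightarrow> as k \<and> (\<lambda>l. rl l k) \<longlonglongrightarrow> rs k"
proof -
  obtain al rl where min: "minimizing al rl"
    using minimizing_exists by blast
  obtain B where B: "\<And>l k. k \<in> {1..K} \<Longrightarrow> norm (al l k) \<le> B \<and> norm (rl l k) \<le> B"
    using minimizing_bounded[OF min] by blast
  have bounded: "\<forall>k\<in>{1..K}. \<exists>B. \<forall>\<^sub>F l in sequentially. norm (al l k, rl l k) \<le> B"
  proof (intro ballI exI always_eventually allI)
    fix k l assume "k \<in> {1..K}"
    then show "norm (al l k, rl l k) \<le> 2 * B"
      using norm_Pair_le[of "al l k" "rl l k"] B[of k l] by linarith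
  qed
  obtain \<sigma> L where \<sigma>: "strict_mono \<sigma>"
    and L: "\<forall>k\<in>{1..K}. (\<lambda>l. (al (\<sigma> l) k, rl (\<sigma> l) k)) \<longlonglongrightarrow> L k"
    using finite_family_convergent_subsequence[OF finite_atLeastAtMost bounded] by blast
  show ?thesis
  proof (rule that[OF minimizing_subseq[OF min \<sigma>]])
    fix k assume "k \<in> {1..K}"
    then have "(\<lambda>l. (al (\<sigma> l) k, rl (\<sigma> l) k)) \<longlonglongrightarrow> L k"
      using L by blast
    from tendsto_fst[OF this] tendsto_snd[OF this]
    show "(\<lambda>l. al (\<sigma> l) k) \<longlonglongrightarrow> fst (L k) \<and> (\<lambda>l. rl (\<sigma> l) k) \<longlonglongrightarrow> snd (L k)"
      by simp
  qed
qed

lemma minimizing_sample_bounded: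
  assumes "minimizing al rl" and "m \<in> {1..M}" and "n \<in> {0..<N}"
  obtains U where "\<And>l. \<Gamma> (al l) (rl l) m n \<le> U"
proof -
  obtain U where U: "\<And>l. norm2MN M N (\<Gamma> (al l) (rl l)) \<le> U"
    using minimizing_GammaK_bounded[OF assms(1)] by blast
  have "\<Gamma> (al l) (rl l) m n \<le> U" for l
    using abs_le_norm2MN[OF assms(2,3), of "\<Gamma> (al l) (rl l)"] abs_ge_self[of "\<Gamma> (al l) (rl l) m n"] U[of l]
    by linarith
  then show ?thesis
    by (rule that)
qed

lemma minimizing_collapsing_terms_ge:
  assumes min: "minimizing al rl"
    and lim: "\<And>k. k \<in> {1..K} \<Longrightarrow> (\<lambda>l. rl l k) \<longlonglongrightarrow> rs k" and m0: "m0 \<in> {1..M}"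
  shows "\<forall>\<^sub>F l in sequentially. \<forall>k\<in>{k \<in> {1..K}. rs k = rmic m0}.
    al l k / norm (rl l k - rmic m0) * \<kappa> 0 / (8 * pi) \<le> al l k * g m0 0 (rl l k)"
proof (intro eventually_ball_finite ballI)
  fix k assume "k \<in> {k \<in> {1..K}. rs k = rmic m0}"
  then have k: "k \<in> {1..K}" and "(\<lambda>l. rl l k) \<longlonglongrightarrow> rmic m0"
    using lim[of k] by auto
  moreover have adm: "\<And>l. adm (al l) (rl l)"
    using min unfolding minimizing_def by blast
  then have "\<forall>l. rl l k \<noteq> rmic m0"
    using admissible_not_mic(2)[OF adm k] m0 unfolding EM_def by blast
  moreover have "\<forall>l. 0 \<le> al l k"
    using admissible_not_mic(1)[OF adm k] by blast
  ultimately show "\<forall>\<^sub>F l in sequentially.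
      al l k / norm (rl l k - rmic m0) * \<kappa> 0 / (8 * pi) \<le> al l k * g m0 0 (rl l k)"
    using gamma_scaled_eventually_ge[where n = 0 and \<rho> = "\<lambda>l. rl l k" and \<alpha> = "\<lambda>l. al l k",
        OF \<kappa>_continuous] \<kappa>_0_pos
    by simp
qed simp

(* The sample (m0, 0) of the model is bounded above along the sequence. In it, the sources
   collapsing onto rmic m0 contribute nonnegative terms, each at least its ratio times
   kappa 0 / (8 pi), while the contributions of the other sources converge. *)
lemma minimizing_ratio_bounded_at_mic:
  assumes min: "minimizing al rl"
    and lim: "\<And>k. k \<in> {1..K} \<Longrightarrow> (\<lambda>l. al l k) \<longlonglongrightarrow> as k \<and> (\<lambda>l. rl l k) \<longlonglongrightarrow> rs k"
    and k0: "k0 \<in> {1..K}" and m0: "m0 \<in> {1..M}" and at_mic: "rs k0 = rmic m0"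
  shows "\<exists>B. \<forall>\<^sub>F l in sequentially. norm (al l k0 / norm (rl l k0 - rmic m0)) \<le> B"
proof -
  define A where "A = {k \<in> {1..K}. rs k = rmic m0}"
  define L where "L = (\<Sum>k\<in>{1..K} - A. as k * g m0 0 (rs k))"
  have A_subset: "A \<subseteq> {1..K}"
    by (auto simp: A_def)
  let ?\<beta> = "\<lambda>l k. al l k / norm (rl l k - rmic m0)"
  have adm: "\<And>l. adm (al l) (rl l)"
    using min unfolding minimizing_def by blast
  have nonneg: "0 \<le> al l k" if "k \<in> {1..K}" for l k
    using admissible_not_mic(1)[OF adm that] .
  have "0 \<in> {0..<N}"
    using N_ge_1 by simp
  then obtain U where U: "\<And>l. \<Gamma> (al l) (rl l) m0 0 \<le> U"
    using minimizing_sample_bounded[OF min m0] by blast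
  have position_lim: "\<And>k. k \<in> {1..K} \<Longrightarrow> (\<lambda>l. rl l k) \<longlonglongrightarrow> rs k"
    using lim by blast
  have "(\<lambda>l. \<Sum>k\<in>{1..K} - A. al l k * g m0 0 (rl l k)) \<longlonglongrightarrow> L"
    unfolding L_def
  proof (intro tendsto_sum tendsto_mult)
    fix k assume k: "k \<in> {1..K} - A"
    then show "(\<lambda>l. al l k) \<longlonglongrightarrow> as k"
      using lim by blast
    show "(\<lambda>l. g m0 0 (rl l k)) \<longlonglongrightarrow> g m0 0 (rs k)"
      using k lim by (intro gamma_tendsto[OF \<kappa>_continuous]) (auto simp: A_def)
  qed
  then have rest: "\<forall>\<^sub>F l in sequentially. L - 1 < (\<Sum>k\<in>{1..K} - A. al l k * g m0 0 (rl l k))"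
    by (rule order_tendstoD) simp
  have collapsing: "\<forall>\<^sub>F l in sequentially. \<forall>k\<in>A. ?\<beta> l k * \<kappa> 0 / (8 * pi) \<le> al l k * g m0 0 (rl l k)"
    using minimizing_collapsing_terms_ge[OF min position_lim m0] unfolding A_def .
  from collapsing rest
  have "\<forall>\<^sub>F l in sequentially. norm (?\<beta> l k0) \<le> (U - L + 1) * (8 * pi) / \<kappa> 0"
  proof eventually_elim
    case (elim l)
    have "?\<beta> l k0 * \<kappa> 0 / (8 * pi) \<le> al l k0 * g m0 0 (rl l k0)"
      using elim(1) k0 at_mic by (auto simp: A_def)
    also have "\<dots> \<le> (\<Sum>k\<in>A. al l k * g m0 0 (rl l k))"
    proof (rule member_le_sum)
      fix k assume "k \<in> A - {k0}"
      then have k: "k \<in> {1..K}" "k \<in> A"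
        by (auto simp: A_def)
      have "0 \<le> ?\<beta> l k * \<kappa> 0 / (8 * pi)"
        using nonneg[OF k(1)] \<kappa>_0_pos by simp
      also have "\<dots> \<le> al l k * g m0 0 (rl l k)"
        using elim(1) k(2) by blast
      finally show "0 \<le> al l k * g m0 0 (rl l k)" .
    qed (use k0 at_mic in \<open>auto simp: A_def\<close>)
    also have "\<dots> = \<Gamma> (al l) (rl l) m0 0 - (\<Sum>k\<in>{1..K} - A. al l k * g m0 0 (rl l k))"
      using sum.subset_diff[OF A_subset finite_atLeastAtMost, of "\<lambda>k. al l k * g m0 0 (rl l k)"]
      by (simp add: GammaK_def)
    also have "\<dots> \<le> U - L + 1"
      using U[of l] elim(2) by linarith
    finally have bound: "?\<beta> l k0 * \<kappa> 0 / (8 * pi) \<le> U - L + 1" .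
    have "?\<beta> l k0 = ?\<beta> l k0 * \<kappa> 0 / (8 * pi) * (8 * pi) / \<kappa> 0"
      using \<kappa>_0_pos by simp
    also have "\<dots> \<le> (U - L + 1) * (8 * pi) / \<kappa> 0"
      using bound \<kappa>_0_pos by (intro divide_right_mono mult_right_mono) auto
    finally show ?case
      using nonneg[OF k0] by simp
  qed
  then show ?thesis ..
qed

lemma minimizing_convergent_with_ratios:
  obtains al rl as rs bs where "minimizing al rl"
    and "\<And>k. k \<in> {1..K} \<Longrightarrow> (\<lambda>l. al l k) \<longlonglongrightarrow> as k \<and> (\<lambda>l. rl l k) \<longlonglongrightarrow> rs k"
    and "\<And>k. k \<in> {1..K} \<Longrightarrow> rs k \<in> EM M rmic \<Longrightarrow> (\<lambda>l. al l k / norm (rl l k - rs k)) \<longlonglongrightarrow> bs k"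
proof -
  obtain al rl as rs where min: "minimizing al rl"
    and lim: "\<And>k. k \<in> {1..K} \<Longrightarrow> (\<lambda>l. al l k) \<longlonglongrightarrow> as k \<and> (\<lambda>l. rl l k) \<longlonglongrightarrow> rs k"
    by (rule minimizing_convergent) blast
  define A where "A = {k \<in> {1..K}. rs k \<in> EM M rmic}"
  have bounded: "\<forall>k\<in>A. \<exists>B. \<forall>\<^sub>F l in sequentially. norm (al l k / norm (rl l k - rs k)) \<le> B"
  proof
    fix k assume "k \<in> A"
    then obtain m where "k \<in> {1..K}" and "m \<in> {1..M}" and "rs k = rmic m"
      by (auto simp: A_def EM_def)
    with minimizing_ratio_bounded_at_mic[OF min lim]
    show "\<exists>B. \<forall>\<^sub>F l in sequentially. norm (al l k / norm (rl l k - rs k)) \<le> B"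
      by simp
  qed
  obtain \<sigma> bs where \<sigma>: "strict_mono \<sigma>"
    and bs: "\<forall>k\<in>A. (\<lambda>l. al (\<sigma> l) k / norm (rl (\<sigma> l) k - rs k)) \<longlonglongrightarrow> bs k"
    using finite_family_convergent_subsequence[OF _ bounded] by (auto simp: A_def)
  show ?thesis
  proof (rule that[OF minimizing_subseq[OF min \<sigma>]])
    fix k assume k: "k \<in> {1..K}"
    have "(\<lambda>l. al l k) \<longlonglongrightarrow> as k" and "(\<lambda>l. rl l k) \<longlonglongrightarrow> rs k"
      using lim[OF k] by auto
    from LIMSEQ_subseq_LIMSEQ[OF this(1) \<sigma>] LIMSEQ_subseq_LIMSEQ[OF this(2) \<sigma>]
    show "(\<lambda>l. al (\<sigma> l) k) \<longlonglongrightarrow> as k \<and> (\<lambda>l. rl (\<sigma> l) k) \<longlonglongrightarrow> rs k"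
      by (simp add: o_def)
    show "(\<lambda>l. al (\<sigma> l) k / norm (rl (\<sigma> l) k - rs k)) \<longlonglongrightarrow> bs k" if "rs k \<in> EM M rmic"
      using bs k that by (simp add: A_def)
  qed
qed

end

locale minimizing_limit = source_localization +
  fixes al :: "nat \<Rightarrow> nat \<Rightarrow> real" and rl :: "nat \<Rightarrow> nat \<Rightarrow> real^3"
    and as :: "nat \<Rightarrow> real" and rs :: "nat \<Rightarrow> real^3" and bs :: "nat \<Rightarrow> real"
  assumes minimizing: "minimizing al rl"
    and amplitude_lim: "\<And>k. k \<in> {1..K} \<Longrightarrow> (\<lambda>l. al l k) \<longlonglongrightarrow> as k"
    and position_lim: "\<And>k. k \<in> {1..K} \<Longrightarrow> (\<lambda>l. rl l k) \<longlonglongrightarrow> rs k"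
    and ratio_lim: "\<And>k. k \<in> {1..K} \<Longrightarrow> rs k \<in> EM M rmic \<Longrightarrow>
      (\<lambda>l. al l k / norm (rl l k - rs k)) \<longlonglongrightarrow> bs k"
begin

definition off_mic_sources :: "nat set" where
  "off_mic_sources = {k \<in> {1..K}. rs k \<notin> EM M rmic}"

definition mic_amplitude :: "nat \<Rightarrow> real" where
  "mic_amplitude m = (\<Sum>k | k \<in> {1..K} \<and> rs k = rmic m. bs k) / (4 * pi)"

lemma amplitude_nonneg: "k \<in> {1..K} \<Longrightarrow> 0 \<le> al l k"
  and position_not_mic: "k \<in> {1..K} \<Longrightarrow> rl l k \<notin> EM M rmic"
  using minimizing admissible_not_mic unfolding minimizing_def by blast+

lemma limit_amplitude_nonneg: "k \<in> {1..K} \<Longrightarrow> 0 \<le> as k"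
  using amplitude_lim amplitude_nonneg by (intro LIMSEQ_le_const[of "\<lambda>l. al l k"]) auto

lemma ratio_limit_nonneg: "k \<in> {1..K} \<Longrightarrow> rs k \<in> EM M rmic \<Longrightarrow> 0 \<le> bs k"
  using ratio_lim amplitude_nonneg by (intro LIMSEQ_le_const[of "\<lambda>l. al l k / norm (rl l k - rs k)"]) auto

lemma limit_amplitude_at_mic:
  assumes "k \<in> {1..K}" and "rs k \<in> EM M rmic"
  shows "as k = 0"
proof -
  have "al l k = al l k / norm (rl l k - rs k) * norm (rl l k - rs k)" for l
    using position_not_mic[OF assms(1), of l] assms(2) by auto
  moreover have "(\<lambda>l. al l k / norm (rl l k - rs k) * norm (rl l k - rs k)) \<longlonglongrightarrow> bs k * norm (rs k - rs k)"
    using assms by (intro tendsto_intros ratio_lim position_lim)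
  ultimately have "(\<lambda>l. al l k) \<longlonglongrightarrow> 0"
    by simp
  then show ?thesis
    using amplitude_lim[OF assms(1)] LIMSEQ_unique by blast
qed

lemma source_term_tendsto:
  assumes "k \<in> {1..K}" and "m \<in> {1..M}"
  shows "(\<lambda>l. al l k * g m n (rl l k)) \<longlonglongrightarrow>
    (if rs k = rmic m then bs k * \<kappa> (real n / fs) / (4 * pi) else as k * g m n (rs k))"
proof (cases "rs k = rmic m")
  case True
  then have "rs k \<in> EM M rmic"
    using assms(2) by (simp add: EM_def)
  moreover have "\<forall>l. rl l k \<noteq> rmic m"
    using position_not_mic[OF assms(1)] assms(2) unfolding EM_def by blast
  ultimately show ?thesis
    using gamma_scaled_tendsto_at_mic[OF \<kappa>_continuous] position_lim[OF assms(1)] ratio_lim[OF assms(1)] True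
    by simp
next
  case False
  then show ?thesis
    using assms by (simp add: tendsto_mult amplitude_lim position_lim gamma_tendsto[OF \<kappa>_continuous])
qed

lemma GammaK_tendsto:
  assumes "m \<in> {1..M}"
  shows "(\<lambda>l. \<Gamma> (al l) (rl l) m n) \<longlonglongrightarrow>
    (\<Sum>k\<in>off_mic_sources. as k * g m n (rs k)) + mic_amplitude m * \<kappa> (real n / fs)"
proof -
  let ?at = "{k \<in> {1..K}. rs k = rmic m}" and ?away = "{k \<in> {1..K}. rs k \<noteq> rmic m}"
  have "(\<lambda>l. \<Gamma> (al l) (rl l) m n) \<longlonglongrightarrow>
      (\<Sum>k=1..K. if rs k = rmic m then bs k * \<kappa> (real n / fs) / (4 * pi) else as k * g m n (rs k))"
    unfolding GammaK_def using assms by (intro tendsto_sum source_term_tendsto) auto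
  also have "(\<Sum>k=1..K. if rs k = rmic m then bs k * \<kappa> (real n / fs) / (4 * pi) else as k * g m n (rs k))
      = (\<Sum>k\<in>?at. bs k * \<kappa> (real n / fs) / (4 * pi)) + (\<Sum>k\<in>?away. as k * g m n (rs k))"
    by (simp add: sum.If_cases Int_def)
  also have "(\<Sum>k\<in>?at. bs k * \<kappa> (real n / fs) / (4 * pi)) = mic_amplitude m * \<kappa> (real n / fs)"
    by (simp add: mic_amplitude_def sum_distrib_right sum_divide_distrib)
  also have "(\<Sum>k\<in>?away. as k * g m n (rs k)) = (\<Sum>k\<in>off_mic_sources. as k * g m n (rs k))"
  proof (rule sum.mono_neutral_right)
    show "off_mic_sources \<subseteq> ?away"
      using assms by (auto simp: off_mic_sources_def EM_def)
    show "\<forall>k\<in>?away - off_mic_sources. as k * g m n (rs k) = 0"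
      by (simp add: off_mic_sources_def limit_amplitude_at_mic)
  qed simp
  finally show ?thesis
    by (simp add: add.commute)
qed

lemma Tinf_eq_limit:
  "Tinf = (\<Sum>m=1..M. \<Sum>n=0..<N. (x m n - (\<Sum>k\<in>off_mic_sources. as k * g m n (rs k))
      - mic_amplitude m * \<kappa> (real n / fs))\<^sup>2) / 2"
proof -
  have "(\<lambda>l. T (al l) (rl l)) \<longlonglongrightarrow> (\<Sum>m=1..M. \<Sum>n=0..<N. (x m n - (\<Sum>k\<in>off_mic_sources. as k * g m n (rs k))
      - mic_amplitude m * \<kappa> (real n / fs))\<^sup>2) / 2"
    unfolding Tfun_eq_sum diff_diff_eq by (intro tendsto_intros GammaK_tendsto) auto
  with minimizing show ?thesis
    unfolding minimizing_def using LIMSEQ_unique by blast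
qed

end

context source_localization
begin

lemma limit_configuration:
  "\<exists>B \<subseteq> {1..K}. \<exists>as rs atl al rl.
     (\<forall>k\<in>B. 0 \<le> as k \<and> rs k \<notin> EM M rmic) \<and> (\<forall>m\<in>{1..M}. 0 \<le> atl m) \<and>
     Tinf = (\<Sum>m=1..M. \<Sum>n=0..<N. (x m n - (\<Sum>k\<in>B. as k * g m n (rs k)) - atl m * \<kappa> (real n / fs))\<^sup>2) / 2 \<and>
     minimizing al rl \<and>
     (\<forall>k\<in>B. (\<lambda>l. al l k) \<longlonglongrightarrow> as k \<and> (\<lambda>l. rl l k) \<longlonglongrightarrow> rs k) \<and>
     (\<forall>k\<in>{1..K} - B. (\<lambda>l. al l k) \<longlonglongrightarrow> 0)"
proof -
  obtain al rl as rs bs where "minimizing al rl"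
    and "\<And>k. k \<in> {1..K} \<Longrightarrow> (\<lambda>l. al l k) \<longlonglongrightarrow> as k \<and> (\<lambda>l. rl l k) \<longlonglongrightarrow> rs k"
    and "\<And>k. k \<in> {1..K} \<Longrightarrow> rs k \<in> EM M rmic \<Longrightarrow> (\<lambda>l. al l k / norm (rl l k - rs k)) \<longlonglongrightarrow> bs k"
    by (rule minimizing_convergent_with_ratios) blast
  then interpret minimizing_limit c fs M N K rmic x \<kappa> al rl as rs bs
    by unfold_locales blast+
  have "off_mic_sources \<subseteq> {1..K}"
    by (auto simp: off_mic_sources_def)
  moreover have "\<forall>k\<in>off_mic_sources. 0 \<le> as k \<and> rs k \<notin> EM M rmic"
    by (simp add: off_mic_sources_def limit_amplitude_nonneg)
  moreover have "\<forall>m\<in>{1..M}. 0 \<le> mic_amplitude m"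
    unfolding mic_amplitude_def
    by (intro ballI divide_nonneg_pos sum_nonneg ratio_limit_nonneg) (auto simp: EM_def)
  moreover have "\<forall>k\<in>off_mic_sources. (\<lambda>l. al l k) \<longlonglongrightarrow> as k \<and> (\<lambda>l. rl l k) \<longlonglongrightarrow> rs k"
    by (simp add: off_mic_sources_def amplitude_lim position_lim)
  moreover have "\<forall>k\<in>{1..K} - off_mic_sources. (\<lambda>l. al l k) \<longlonglongrightarrow> 0"
    using amplitude_lim limit_amplitude_at_mic by (fastforce simp: off_mic_sources_def)
  ultimately show ?thesis
    using Tinf_eq_limit minimizing by blast
qed

end

theorem lemma2:
  fixes c fs :: real and M N K :: nat
    and rmic :: "nat \<Rightarrow> real^3" and x :: "nat \<Rightarrow> nat \<Rightarrow> real"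
    and \<kappa> :: "real \<Rightarrow> real"
  assumes "c > 0" and "fs > 0" and "M \<ge> 1" and "N \<ge> 1" and "K \<ge> 1"
    and "continuous_on UNIV \<kappa>" and "\<kappa> 0 > 0" and "(\<kappa> \<longlongrightarrow> 0) at_infinity"
    and "Cset c fs M N rmic \<noteq> {}"
    and "amplitude_lower_bounded c fs \<kappa> rmic M N K"
  shows "\<exists>K'\<le>K. \<exists>a r atl.
     (\<forall>k\<in>{1..K'}. 0 \<le> a k \<and> r k \<notin> EM M rmic) \<and> (\<forall>m\<in>{1..M}. 0 \<le> atl m) \<and>
     infT c fs \<kappa> rmic M N x K = Ttilde c fs \<kappa> rmic M N x K' a r atl \<and>
     (\<exists>al rl. (\<forall>l. admissible c fs M N rmic K (al l) (rl l)) \<and>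
        (\<lambda>l. Tfun c fs \<kappa> rmic M N x K (al l) (rl l)) \<longlonglongrightarrow> infT c fs \<kappa> rmic M N x K \<and>
        (\<forall>k\<in>{1..K'}. (\<lambda>l. al l k) \<longlonglongrightarrow> a k \<and> (\<lambda>l. rl l k) \<longlonglongrightarrow> r k) \<and>
        (\<forall>k\<in>{K'+1..K}. (\<lambda>l. al l k) \<longlonglongrightarrow> 0))"
proof -
  interpret source_localization c fs M N K rmic x \<kappa>
    using assms by unfold_locales auto
  obtain B as rs atl al rl where B: "B \<subseteq> {1..K}"
    and limits: "\<forall>k\<in>B. 0 \<le> as k \<and> rs k \<notin> EM M rmic" "\<forall>m\<in>{1..M}. 0 \<le> atl m"
    and Tinf: "Tinf = (\<Sum>m=1..M. \<Sum>n=0..<N. (x m n - (\<Sum>k\<in>B. as k * g m n (rs k)) - atl m * \<kappa> (real n / fs))\<^sup>2) / 2"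
    and min: "minimizing al rl"
    and converge: "\<forall>k\<in>B. (\<lambda>l. al l k) \<longlonglongrightarrow> as k \<and> (\<lambda>l. rl l k) \<longlonglongrightarrow> rs k"
    and vanish: "\<forall>k\<in>{1..K} - B. (\<lambda>l. al l k) \<longlonglongrightarrow> 0"
    using limit_configuration by blast
  obtain \<pi> where front: "bij_betw \<pi> {1..card B} B" and rest: "bij_betw \<pi> {card B + 1..K} ({1..K} - B)"
    and perm: "bij_betw \<pi> {1..K} {1..K}"
    using obtain_bij_onto_initial_segment[OF B] by blast
  have reindex: "(\<Sum>k=1..card B. as (\<pi> k) * g m n (rs (\<pi> k))) = (\<Sum>k\<in>B. as k * g m n (rs k))" for m n
    by (rule sum.reindex_bij_betw[OF front])
  show ?thesis
  proof (intro exI conjI)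
    show "Tinf = Ttilde c fs \<kappa> rmic M N x (card B) (\<lambda>k. as (\<pi> k)) (\<lambda>k. rs (\<pi> k)) atl"
      unfolding Tinf Ttilde_def reindex by simp
    show "\<forall>l. adm (\<lambda>k. al l (\<pi> k)) (\<lambda>k. rl l (\<pi> k))"
      and "(\<lambda>l. T (\<lambda>k. al l (\<pi> k)) (\<lambda>k. rl l (\<pi> k))) \<longlonglongrightarrow> Tinf"
      using minimizing_reindex[OF perm min] by (simp_all add: minimizing_def)
    show "card B \<le> K"
      using card_mono[OF _ B] by simp
    show "\<forall>k\<in>{1..card B}. 0 \<le> as (\<pi> k) \<and> rs (\<pi> k) \<notin> EM M rmic"
      using limits(1) bij_betwE[OF front] by blast
    show "\<forall>k\<in>{1..card B}. (\<lambda>l. al l (\<pi> k)) \<longlonglongrightarrow> as (\<pi> k) \<and> (\<lambda>l. rl l (\<pi> k)) \<longlonglongrightarrow> rs (\<pi> k)"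
      using converge bij_betwE[OF front] by blast
    show "\<forall>k\<in>{card B + 1..K}. (\<lambda>l. al l (\<pi> k)) \<longlonglongrightarrow> 0"
      using vanish bij_betwE[OF rest] by blast
  qed (use limits(2) in blast)
qed

end
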